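(* For $t\in(0,1)$ and all $n\ge 0$ (with $n\ge1$ where $n-1$ indices or $\beta_n$ occur), the following identities hold: $$r_{n+1}+r_n=(t-\alpha_n)R_n,$$ $$-(y_{n+1}+y_n)=(\alpha_n-1)x_n+\beta,$$ $$y_{n+1}+y_n-r_{n+1}-r_n=2n+1+\alpha-\alpha_n(x_n-R_n),$$ $$\beta_nR_nR_{n-1}=r_n^2,$$ $$\beta_nx_nx_{n-1}=y_n^2+\beta y_n,$$ $$\beta_n(x_n-R_n)(x_{n-1}-R_{n-1})=(y_n-r_n-n)^2-\alpha(y_n-r_n-n),$$ $$\beta_n(x_nR_{n-1}+x_{n-1}R_n)=(2n+\alpha+\beta)y_n-(2n+\alpha)r_n+2y_nr_n-n(n+\alpha).$$
   Context: Fix $\alpha>0$, $\beta>0$, and real $A,B$ with $A\ge0$, $A+B\ge0$, not both zero; $\theta$ is the Heaviside step function. For $t\in(0,1)$ let $w(x;t)=x^\alpha(1-x)^\beta(A+B\theta(x-t))$ on $[0,1]$, and let $P_n(x)=P_n(x;t)=x^n+\mathsf p_1(n,t)x^{n-1}+\cdots$ be the monic orthogonal polynomials: $\int_0^1P_iP_jw\,dx=h_i(t)\delta_{ij}$, $h_i>0$, satisfying $xP_n=P_{n+1}+\alpha_nP_n+\beta_nP_{n-1}$, $P_{-1}=0$, $\beta_n=h_n/h_{n-1}$, $\mathsf p_1(0,t)=0$. Define $R_n(t)=B\,t^\alpha(1-t)^\beta P_n(t;t)^2/h_n$, $r_n(t)=B\,t^\alpha(1-t)^\beta P_n(t;t)P_{n-1}(t;t)/h_{n-1}$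 ($r_0=0$), $x_n(t)=\frac{\beta}{h_n}\int_0^1\frac{P_n(y)^2}{1-y}\,y^\alpha(1-y)^\beta(A+B\theta(y-t))\,dy$, $y_n(t)=\frac{\beta}{h_{n-1}}\int_0^1\frac{P_n(y)P_{n-1}(y)}{1-y}\,y^\alpha(1-y)^\beta(A+B\theta(y-t))\,dy$ ($y_0=0$). *)

theory Defs
  imports "HOL-Analysis.Analysis" "HOL-Computational_Algebra.Polynomial"
begin

text \<open>Heaviside step function (value at 0 is irrelevant: a null set).\<close>
definition heaviside :: "real \<Rightarrow> real" where
  "heaviside s = (if s \<ge> 0 then 1 else 0)"

definition wt :: "real \<Rightarrow> real \<Rightarrow> real \<Rightarrow> real \<Rightarrow> real \<Rightarrow> real \<Rightarrow> real" where
  "wt al be A B t x = x powr al * (1 - x) powr be * (A + B * heaviside (x - t))"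

definition ip :: "real \<Rightarrow> real \<Rightarrow> real \<Rightarrow> real \<Rightarrow> real \<Rightarrow> real poly \<Rightarrow> real poly \<Rightarrow> real" where
  "ip al be A B t p q = (LINT x:{0..1}|lborel. poly p x * poly q x * wt al be A B t x)"

definition hn :: "real \<Rightarrow> real \<Rightarrow> real \<Rightarrow> real \<Rightarrow> real \<Rightarrow> (nat \<Rightarrow> real poly) \<Rightarrow> nat \<Rightarrow> real" where
  "hn al be A B t P n = ip al be A B t (P n) (P n)"

text \<open>beta_n = h_n / h_{n-1}; set to 0 for n = 0 (it only multiplies P_{-1} = 0).\<close>
definition betaN :: "real \<Rightarrow> real \<Rightarrow> real \<Rightarrow> real \<Rightarrow> real \<Rightarrow> (nat \<Rightarrow> real poly) \<Rightarrow> nat \<Rightarrow> real" where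
  "betaN al be A B t P n = (if n = 0 then 0 else hn al be A B t P n / hn al be A B t P (n - 1))"

definition Rn :: "real \<Rightarrow> real \<Rightarrow> real \<Rightarrow> real \<Rightarrow> real \<Rightarrow> (nat \<Rightarrow> real poly) \<Rightarrow> nat \<Rightarrow> real" where
  "Rn al be A B t P n = B * t powr al * (1 - t) powr be * (poly (P n) t)^2 / hn al be A B t P n"

definition rn :: "real \<Rightarrow> real \<Rightarrow> real \<Rightarrow> real \<Rightarrow> real \<Rightarrow> (nat \<Rightarrow> real poly) \<Rightarrow> nat \<Rightarrow> real" where
  "rn al be A B t P n = (if n = 0 then 0 else
     B * t powr al * (1 - t) powr be * poly (P n) t * poly (P (n - 1)) t / hn al be A B t P (n - 1))"

definition xn :: "real \<Rightarrow> real \<Rightarrow> real \<Rightarrow> real \<Rightarrow> real \<Rightarrow> (nat \<Rightarrow> real poly) \<Rightarrow> nat \<Rightarrow> real" where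
  "xn al be A B t P n = be / hn al be A B t P n *
     (LINT y:{0..1}|lborel. (poly (P n) y)^2 / (1 - y) * wt al be A B t y)"

definition yn :: "real \<Rightarrow> real \<Rightarrow> real \<Rightarrow> real \<Rightarrow> real \<Rightarrow> (nat \<Rightarrow> real poly) \<Rightarrow> nat \<Rightarrow> real" where
  "yn al be A B t P n = (if n = 0 then 0 else be / hn al be A B t P (n - 1) *
     (LINT y:{0..1}|lborel. poly (P n) y * poly (P (n - 1)) y / (1 - y) * wt al be A B t y))"

end

theory Submission
  imports Defs
begin

text \<open>
  Write \<open>L p = \<integral>\<^sub>0\<^sup>1 p w\<close> for the moment functional of the weight, so that
  \<open>h\<^sub>n = L(P\<^sub>n\<^sup>2)\<close>.  All seven identities come from three further linear functionals on
  polynomials, each of which turns multiplication by a linear factor \<open>x - a\<close> into a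
  multiple of \<open>L\<close>:
  \<^item> the jump term \<open>J p = B t\<^sup>\<alpha> (1-t)\<^sup>\<beta> p(t)\<close>, with \<open>J((x-t)q) = 0\<close>;
  \<^item> the pole moment \<open>K p = \<beta> \<integral> p w/(1-x)\<close>, with \<open>K((x-1)q) = -\<beta> L q\<close>;
  \<^item> the defect \<open>D p = K p - L p' - J p\<close>, with \<open>D(x q) = \<alpha> L q\<close>; this is integration by
    parts against \<open>x\<^sup>\<alpha>(1-x)\<^sup>\<beta>\<close>, the jump of the weight at \<open>t\<close> producing \<open>J\<close>.
  For any orthogonal polynomial sequence and any linear functional \<open>F\<close> with
  \<open>F((x-a)q) = k L q\<close>, the normalised quantities \<open>d\<^sub>n = F(P\<^sub>n\<^sup>2)/h\<^sub>n\<close> and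
  \<open>o\<^sub>n = F(P\<^sub>nP\<^sub>n\<^sub>-\<^sub>1)/h\<^sub>n\<^sub>-\<^sub>1\<close> satisfy \<open>o\<^sub>n\<^sub>+\<^sub>1 + o\<^sub>n = (a - \<alpha>\<^sub>n) d\<^sub>n + k\<close> and
  \<open>\<beta>\<^sub>n d\<^sub>n d\<^sub>n\<^sub>-\<^sub>1 = o\<^sub>n\<^sup>2 - k o\<^sub>n\<close> (locale \<open>ops_functional\<close>).  For \<open>F = J, K, D\<close> these are
  \<open>R\<^sub>n, r\<^sub>n\<close>; \<open>x\<^sub>n, y\<^sub>n\<close>; \<open>x\<^sub>n - R\<^sub>n, y\<^sub>n - r\<^sub>n - n\<close>, which gives the first six identities;
  the seventh is an algebraic consequence of the last three.
\<close>

subsection \<open>Integrability against the weight\<close>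

lemma poly_measurable [measurable]: "poly p \<in> borel_measurable borel"
  for p :: "real poly"
  by (intro borel_measurable_continuous_onI continuous_intros)

lemma wt_measurable [measurable]: "wt al be A B t \<in> borel_measurable borel"
  unfolding wt_def heaviside_def by measurable

text \<open>The singular factor \<open>(1-y)\<^sup>\<beta>\<^sup>-\<^sup>1\<close> is integrable on \<open>[0,1]\<close> for \<open>\<beta> > 0\<close>;
  this is what makes the pole moment \<open>x\<^sub>n\<close> finite.\<close>
lemma integrable_endpoint_power:
  fixes be :: real assumes be: "be > 0"
  shows "set_integrable lborel {0..1::real} (\<lambda>y. (1 - y) powr (be - 1))"
proof -
  let ?F = "\<lambda>y::real. - ((1 - y) powr be / be)"
  have cont: "continuous_on {0..1} ?F"
    using be by (intro continuous_intros continuous_on_powr') auto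
  have der: "(?F has_vector_derivative (1 - y) powr (be - 1)) (at y)" if "y \<in> {0<..<1}" for y
  proof -
    have "(?F has_real_derivative (1 - y) powr (be - 1)) (at y)"
      using be that by (auto intro!: derivative_eq_intros)
    then show ?thesis by (simp add: has_real_derivative_iff_has_vector_derivative)
  qed
  have "((\<lambda>y. (1 - y) powr (be - 1)) has_integral (?F 1 - ?F 0)) {0..1}"
    by (rule fundamental_theorem_of_calculus_interior[OF _ cont der]) auto
  then have "(\<lambda>y. (1 - y) powr (be - 1)) absolutely_integrable_on {0..1}"
    by (intro nonnegative_absolutely_integrable_1) auto
  then show ?thesis
    unfolding set_integrable_def by (simp add: integrable_completion)
qed

lemma poly_bounded_on_unit_interval:
  obtains M where "M \<ge> 0" "\<And>y::real. y \<in> {0..1} \<Longrightarrow> \<bar>poly p y\<bar> \<le> M"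
proof -
  have "compact (poly p ` {0..1::real})"
    by (intro compact_continuous_image continuous_intros) auto
  then obtain M where "M > 0" "\<forall>x\<in>poly p ` {0..1}. norm x \<le> M"
    using compact_imp_bounded bounded_pos by metis
  then show ?thesis using that[of M] by auto
qed

lemma wt_bound:
  assumes "al \<ge> 0" "be \<ge> 0" "y \<in> {0..1}"
  shows "\<bar>wt al be A B t y\<bar> \<le> (1 - y) powr be * (\<bar>A\<bar> + \<bar>B\<bar>)"
proof -
  have "y powr al \<le> 1" using assms by (intro powr_le1) auto
  moreover have "\<bar>A + B * heaviside (y - t)\<bar> \<le> \<bar>A\<bar> + \<bar>B\<bar>" by (auto simp: heaviside_def)
  ultimately have "y powr al * (1 - y) powr be * \<bar>A + B * heaviside (y - t)\<bar>
      \<le> 1 * (1 - y) powr be * (\<bar>A\<bar> + \<bar>B\<bar>)"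
    by (intro mult_mono) auto
  then show ?thesis by (simp add: wt_def abs_mult)
qed

lemma integrable_poly_wt:
  assumes "al \<ge> 0" "be \<ge> 0"
  shows "set_integrable lborel {0..1::real} (\<lambda>y. poly p y * wt al be A B t y)"
proof -
  obtain M where M: "M \<ge> 0" "\<And>y::real. y \<in> {0..1} \<Longrightarrow> \<bar>poly p y\<bar> \<le> M"
    using poly_bounded_on_unit_interval by blast
  have const: "set_integrable lborel {0..1::real} (\<lambda>y. M * (\<bar>A\<bar> + \<bar>B\<bar>))"
    by (rule borel_integrable_atLeastAtMost') (intro continuous_intros)
  show ?thesis
  proof (rule set_integrable_bound[OF const])
    show "set_borel_measurable lborel {0..1} (\<lambda>y. poly p y * wt al be A B t y)"
      unfolding set_borel_measurable_def measurable_lborel1 by measurable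
    have "\<bar>poly p y * wt al be A B t y\<bar> \<le> M * (\<bar>A\<bar> + \<bar>B\<bar>)" if y: "y \<in> {0..1}" for y
    proof -
      have "(1 - y) powr be * (\<bar>A\<bar> + \<bar>B\<bar>) \<le> \<bar>A\<bar> + \<bar>B\<bar>"
        using y assms by (intro mult_left_le_one_le powr_le1) auto
      then have "\<bar>wt al be A B t y\<bar> \<le> \<bar>A\<bar> + \<bar>B\<bar>"
        using wt_bound[OF assms y, of A B t] by linarith
      then show ?thesis using M y by (simp add: abs_mult mult_mono)
    qed
    then show "AE y in lborel. y \<in> {0..1} \<longrightarrow>
        norm (poly p y * wt al be A B t y) \<le> norm (M * (\<bar>A\<bar> + \<bar>B\<bar>))"
      using M(1) by auto
  qed
qed

lemma integrable_poly_wt_pole: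
  assumes "al \<ge> 0" "be > 0"
  shows "set_integrable lborel {0..1::real} (\<lambda>y. poly p y / (1 - y) * wt al be A B t y)"
proof -
  obtain M where M: "M \<ge> 0" "\<And>y::real. y \<in> {0..1} \<Longrightarrow> \<bar>poly p y\<bar> \<le> M"
    using poly_bounded_on_unit_interval by blast
  let ?g = "\<lambda>y::real. M * (\<bar>A\<bar> + \<bar>B\<bar>) * (1 - y) powr (be - 1)"
  have dom: "set_integrable lborel {0..1::real} ?g"
    using integrable_endpoint_power[OF assms(2)] by (intro set_integrable_mult_right) auto
  show ?thesis
  proof (rule set_integrable_bound[OF dom])
    show "set_borel_measurable lborel {0..1} (\<lambda>y. poly p y / (1 - y) * wt al be A B t y)"
      unfolding set_borel_measurable_def measurable_lborel1 by measurable
    have "\<bar>poly p y / (1 - y) * wt al be A B t y\<bar> \<le> ?g y" if y: "y \<in> {0..1}" for y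
    proof (cases "y = 1")
      case True
      then show ?thesis by simp
    next
      case False
      have pos: "1 - y > 0" using y False by auto
      have "\<bar>wt al be A B t y\<bar> / (1 - y) \<le> (1 - y) powr be * (\<bar>A\<bar> + \<bar>B\<bar>) / (1 - y)"
        using wt_bound[of al be y] assms y pos by (intro divide_right_mono) auto
      also have "\<dots> = (1 - y) powr (be - 1) * (\<bar>A\<bar> + \<bar>B\<bar>)"
        using pos by (simp add: powr_diff)
      finally have "\<bar>poly p y\<bar> * (\<bar>wt al be A B t y\<bar> / (1 - y))
          \<le> M * ((1 - y) powr (be - 1) * (\<bar>A\<bar> + \<bar>B\<bar>))"
        using M y by (intro mult_mono) auto
      then show ?thesis using pos by (simp add: abs_mult mult_ac)
    qed
    then show "AE y in lborel. y \<in> {0..1} \<longrightarrow>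
        norm (poly p y / (1 - y) * wt al be A B t y) \<le> norm (?g y)"
      by (intro AE_I2 impI) (metis abs_ge_self order_trans real_norm_def)
  qed
qed

subsection \<open>The functionals attached to the weight\<close>

definition moment :: "real \<Rightarrow> real \<Rightarrow> real \<Rightarrow> real \<Rightarrow> real \<Rightarrow> real poly \<Rightarrow> real" where
  "moment al be A B t p = (LINT y:{0..1}|lborel. poly p y * wt al be A B t y)"

definition pole_moment :: "real \<Rightarrow> real \<Rightarrow> real \<Rightarrow> real \<Rightarrow> real \<Rightarrow> real poly \<Rightarrow> real" where
  "pole_moment al be A B t p = be * (LINT y:{0..1}|lborel. poly p y / (1 - y) * wt al be A B t y)"

definition jump_term :: "real \<Rightarrow> real \<Rightarrow> real \<Rightarrow> real \<Rightarrow> real poly \<Rightarrow> real" where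
  "jump_term al be B t p = B * t powr al * (1 - t) powr be * poly p t"

definition ibp_defect :: "real \<Rightarrow> real \<Rightarrow> real \<Rightarrow> real \<Rightarrow> real \<Rightarrow> real poly \<Rightarrow> real" where
  "ibp_defect al be A B t p =
     pole_moment al be A B t p - moment al be A B t (pderiv p) - jump_term al be B t p"

lemma ip_eq_moment: "ip al be A B t p q = moment al be A B t (p * q)"
  by (simp add: ip_def moment_def)

lemma moment_add:
  assumes "al \<ge> 0" "be \<ge> 0"
  shows "moment al be A B t (p + q) = moment al be A B t p + moment al be A B t q"
  unfolding moment_def
  using set_integral_add(2)[OF integrable_poly_wt[OF assms, of p] integrable_poly_wt[OF assms, of q]]
  by (simp add: distrib_right)

lemma moment_smult: "moment al be A B t (smult c p) = c * moment al be A B t p"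
  by (simp add: moment_def mult.assoc)

lemma pole_moment_add:
  assumes "al \<ge> 0" "be > 0"
  shows "pole_moment al be A B t (p + q) = pole_moment al be A B t p + pole_moment al be A B t q"
  unfolding pole_moment_def
  using set_integral_add(2)[OF integrable_poly_wt_pole[OF assms, of p]
      integrable_poly_wt_pole[OF assms, of q]]
  by (simp add: add_divide_distrib distrib_right distrib_left)

lemma pole_moment_smult: "pole_moment al be A B t (smult c p) = c * pole_moment al be A B t p"
proof -
  have "(\<lambda>y. poly (smult c p) y / (1 - y) * wt al be A B t y)
      = (\<lambda>y. c * (poly p y / (1 - y) * wt al be A B t y))"
    by auto
  then show ?thesis unfolding pole_moment_def by (simp only: set_integral_mult_right) simp
qed

text \<open>The factor \<open>x - 1\<close> cancels the pole: \<open>K((x-1)q) = -\<beta> L q\<close>.\<close>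
lemma pole_moment_root_one:
  assumes "al \<ge> 0" "be > 0"
  shows "pole_moment al be A B t ([:-1, 1:] * q) = - be * moment al be A B t q"
proof -
  have "(LINT y:{0..1}|lborel. poly ([:-1, 1:] * q) y / (1 - y) * wt al be A B t y)
      = (LINT y:{0..1}|lborel. - (poly q y * wt al be A B t y))"
  proof (rule set_lebesgue_integral_cong)
    have "poly ([:-1, 1:] * q) y / (1 - y) * wt al be A B t y = - (poly q y * wt al be A B t y)" for y
    proof (cases "y = 1")
      case True
      then show ?thesis using assms(2) by (simp add: wt_def)
    next
      case False
      then show ?thesis by (simp add: field_simps)
    qed
    then show "\<forall>y. y \<in> {0..1} \<longrightarrow>
        poly ([:-1, 1:] * q) y / (1 - y) * wt al be A B t y = - (poly q y * wt al be A B t y)"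
      by blast
  qed auto
  then show ?thesis
    unfolding pole_moment_def moment_def
    using set_integral_uminus[OF integrable_poly_wt[of al be q A B t]] assms by simp
qed

text \<open>Fundamental theorem of calculus against the step weight \<open>A + B \<theta>(y - t)\<close>: for a
  function vanishing at both endpoints only the jump at \<open>t\<close> survives.\<close>
lemma step_weight_ftc:
  fixes g g' :: "real \<Rightarrow> real"
  assumes t: "0 < t" "t < 1"
    and cont: "continuous_on {0..1} g"
    and deriv: "\<And>y. 0 < y \<Longrightarrow> y < 1 \<Longrightarrow> (g has_real_derivative g' y) (at y)"
    and ends: "g 0 = 0" "g 1 = 0"
  shows "((\<lambda>y. g' y * (A + B * heaviside (y - t))) has_integral (- B * g t)) {0..1}"
proof -
  have ftc: "(g' has_integral (g v - g u)) {u..v}" if "0 \<le> u" "u \<le> v" "v \<le> 1" for u v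
  proof (rule fundamental_theorem_of_calculus_interior)
    show "continuous_on {u..v} g" by (rule continuous_on_subset[OF cont]) (use that in auto)
    show "(g has_vector_derivative g' y) (at y)" if "y \<in> {u<..<v}" for y
      using deriv[of y] that \<open>0 \<le> u\<close> \<open>v \<le> 1\<close>
      by (auto simp: has_real_derivative_iff_has_vector_derivative)
  qed (use that in auto)
  have left: "((\<lambda>y. g' y * (A + B * heaviside (y - t))) has_integral A * (g t - g 0)) {0..t}"
  proof (rule has_integral_spike_finite[where S = "{t}" and f = "\<lambda>y. A * g' y"])
    show "((\<lambda>y. A * g' y) has_integral A * (g t - g 0)) {0..t}"
      using has_integral_mult_right[OF ftc] t by simp
  qed (auto simp: heaviside_def)
  have right: "((\<lambda>y. g' y * (A + B * heaviside (y - t))) has_integral (A + B) * (g 1 - g t)) {t..1}"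
  proof (rule has_integral_eq[rotated])
    show "((\<lambda>y. (A + B) * g' y) has_integral (A + B) * (g 1 - g t)) {t..1}"
      using t by (intro has_integral_mult_right ftc) auto
  qed (auto simp: heaviside_def algebra_simps)
  show ?thesis
    using has_integral_combine[OF _ _ left right] t ends by (simp add: algebra_simps)
qed

text \<open>Integration by parts against \<open>y\<^sup>\<alpha>(1-y)\<^sup>\<beta>(A + B\<theta>(y-t))\<close>, applied to \<open>y\<^sup>\<alpha>\<^sup>+\<^sup>1(1-y)\<^sup>\<beta> r(y)\<close>.\<close>
lemma integration_by_parts:
  fixes al be A B t :: real and r :: "real poly"
  assumes al: "al > 0" and be: "be > 0" and t: "0 < t" "t < 1"
  defines "q \<equiv> [:0, 1:] * r"
  shows "pole_moment al be A B t q
    = moment al be A B t (pderiv q + smult al r) + jump_term al be B t q"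
proof -
  define g where "g y = y powr al * (1 - y) powr be * poly q y" for y :: real
  define g' where "g' y = poly (pderiv q + smult al r) y * y powr al * (1 - y) powr be
      - be * poly q y / (1 - y) * y powr al * (1 - y) powr be" for y :: real
  have q_eval: "poly q y = y * poly r y" for y by (simp add: q_def)
  have cont: "continuous_on {0..1} g"
    unfolding g_def using al be by (intro continuous_intros continuous_on_powr') auto
  have deriv: "(g has_real_derivative g' y) (at y)" if y: "0 < y" "y < 1" for y
  proof -
    define D where "D = (al * y powr (al - 1) * (1 - y) powr be
        - y powr al * (be * (1 - y) powr (be - 1))) * poly q y
        + y powr al * (1 - y) powr be * poly (pderiv q) y"
    have "(g has_real_derivative D) (at y)"
      unfolding g_def D_def using y
      by (auto intro!: derivative_eq_intros poly_DERIV simp: algebra_simps)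
    moreover have powr_shift: "y powr (al - 1) = y powr al / y"
        "(1 - y) powr (be - 1) = (1 - y) powr be / (1 - y)"
      using y by (simp_all add: powr_diff)
    have "D = g' y"
      unfolding D_def g'_def powr_shift q_eval using y by (simp add: field_simps)
    ultimately show ?thesis by simp
  qed
  define f where "f y = poly (pderiv q + smult al r) y * wt al be A B t y
      - be * (poly q y / (1 - y) * wt al be A B t y)" for y
  have "g' y * (A + B * heaviside (y - t)) = f y" for y
    by (simp add: f_def g'_def wt_def algebra_simps add_divide_distrib)
  then have has_int: "(f has_integral (- B * g t)) {0..1}"
    using step_weight_ftc[OF t cont deriv, of A B] al be by (simp add: g_def)
  have f_int: "set_integrable lborel {0..1::real} f"
    unfolding f_def using al be
    by (intro set_integral_diff set_integrable_mult_right integrable_poly_wt integrable_poly_wt_pole) auto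
  have "(LINT y:{0..1}|lborel. f y) = - B * g t"
    using set_borel_integral_eq_integral(2)[OF f_int] has_int by (simp add: integral_unique)
  moreover have "(LINT y:{0..1}|lborel. f y)
      = moment al be A B t (pderiv q + smult al r) - pole_moment al be A B t q"
    unfolding f_def moment_def pole_moment_def using al be
    by (simp only: set_integral_diff(2) set_integral_mult_right integrable_poly_wt
        integrable_poly_wt_pole set_integrable_mult_right less_imp_le)
  ultimately have "moment al be A B t (pderiv q + smult al r) - pole_moment al be A B t q = - B * g t"
    by simp
  then show ?thesis by (simp add: g_def jump_term_def algebra_simps)
qed

subsection \<open>Orthogonal polynomials for an abstract linear functional\<close>

lemma coeff_synthetic_div_above:
  assumes "degree p \<le> k"
  shows "coeff (synthetic_div p c) k = 0"
proof (cases "degree p = 0")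
  case True
  then show ?thesis by (simp add: synthetic_div_eq_0_iff[THEN iffD2])
next
  case False
  then show ?thesis using assms by (intro coeff_eq_0) (simp add: degree_synthetic_div)
qed

lemma coeff_synthetic_div_top:
  fixes p :: "'a::comm_ring poly"
  assumes "degree p = Suc d"
  shows "coeff (synthetic_div p c) d = lead_coeff p"
proof -
  have "coeff (p + smult c (synthetic_div p c)) (Suc d) = coeff (synthetic_div p c) d"
    by (simp only: synthetic_div_correct) simp
  then show ?thesis
    using coeff_synthetic_div_above[of p "Suc d" c] assms by simp
qed

text \<open>A monic orthogonal polynomial sequence \<open>P\<^sub>n\<close> for a linear functional \<open>L\<close> with positive
  norms \<open>h\<^sub>n = L(P\<^sub>n\<^sup>2)\<close> and its three-term recurrence; \<open>\<beta>\<^sub>0 = 0\<close> encodes \<open>P\<^sub>-\<^sub>1 = 0\<close>.\<close>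
locale ops =
  fixes L :: "real poly \<Rightarrow> real" and P :: "nat \<Rightarrow> real poly" and alpha beta :: "nat \<Rightarrow> real"
  assumes L_add: "L (p + q) = L p + L q"
    and L_smult: "L (smult c p) = c * L p"
    and degree_P: "degree (P n) = n"
    and monic_P: "lead_coeff (P n) = 1"
    and orthogonal: "i \<noteq> j \<Longrightarrow> L (P i * P j) = 0"
    and norm_pos: "L (P n * P n) > 0"
    and recurrence: "[:0, 1:] * P n = P (Suc n) + smult (alpha n) (P n) + smult (beta n) (P (n - 1))"
    and beta_eq: "beta n = (if n = 0 then 0 else L (P n * P n) / L (P (n - 1) * P (n - 1)))"
begin

abbreviation h :: "nat \<Rightarrow> real" where "h n \<equiv> L (P n * P n)"

lemma L_zero: "L 0 = 0"
  using L_smult[of 0 0] by simp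

lemma coeff_P_above: "n < k \<Longrightarrow> coeff (P n) k = 0"
  using degree_P[of n] by (simp add: coeff_eq_0)

lemma coeff_P_top: "coeff (P n) n = 1"
  using monic_P[of n] by (simp add: degree_P)

lemma orthogonal_lower:
  assumes "\<And>k. i \<le> k \<Longrightarrow> coeff q k = 0"
  shows "L (P i * q) = 0"
proof -
  have "\<forall>q. (\<forall>k\<ge>m. coeff q k = 0) \<longrightarrow> (\<forall>i\<ge>m. L (P i * q) = 0)" for m
  proof (induction m)
    case 0
    then show ?case by (metis L_zero coeff_0 le0 mult_zero_right poly_eqI)
  next
    case (Suc m)
    show ?case
    proof (intro allI impI)
      fix q :: "real poly" and i
      assume q: "\<forall>k\<ge>Suc m. coeff q k = 0" and i: "Suc m \<le> i"
      define q' where "q' = q - smult (coeff q m) (P m)"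
      have "coeff q' k = 0" if "m \<le> k" for k
      proof (cases "k = m")
        case True
        then show ?thesis using coeff_P_top[of m] by (simp add: q'_def)
      next
        case False
        then show ?thesis using q that coeff_P_above[of m k] by (simp add: q'_def)
      qed
      then have "L (P i * q') = 0" using Suc.IH i by auto
      moreover have "P i * q = P i * q' + smult (coeff q m) (P i * P m)"
        by (simp add: q'_def algebra_simps)
      ultimately show "L (P i * q) = 0" using orthogonal[of i m] i by (simp add: L_add L_smult)
    qed
  qed
  then show ?thesis using assms by blast
qed

lemma orthogonal_top:
  assumes "\<And>k. i < k \<Longrightarrow> coeff q k = 0"
  shows "L (P i * q) = coeff q i * h i"
proof -
  define q' where "q' = q - smult (coeff q i) (P i)"
  have "L (P i * q') = 0"
    using assms coeff_P_top[of i] coeff_P_above[of i]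
    by (intro orthogonal_lower) (auto simp: q'_def le_eq_less_or_eq)
  moreover have "P i * q = P i * q' + smult (coeff q i) (P i * P i)"
    by (simp add: q'_def algebra_simps)
  ultimately show ?thesis by (simp add: L_add L_smult)
qed

text \<open>Moments of derivatives, which produce the shift \<open>-n\<close> in \<open>y\<^sub>n - r\<^sub>n - n\<close>.\<close>
lemma L_pderiv_square: "L (pderiv (P n * P n)) = 0"
proof -
  have "L (P n * pderiv (P n)) = 0"
    by (rule orthogonal_lower) (simp add: coeff_pderiv coeff_P_above)
  moreover have "pderiv (P n * P n) = P n * pderiv (P n) + P n * pderiv (P n)"
    by (simp add: pderiv_mult mult.commute)
  ultimately show ?thesis by (simp only: L_add)
qed

lemma L_pderiv_consecutive: "L (pderiv (P (Suc m) * P m)) = real (Suc m) * h m"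
proof -
  have "L (P m * pderiv (P (Suc m))) = coeff (pderiv (P (Suc m))) m * h m"
    by (rule orthogonal_top) (simp add: coeff_pderiv coeff_P_above)
  moreover have "L (P (Suc m) * pderiv (P m)) = 0"
    by (rule orthogonal_lower) (simp add: coeff_pderiv coeff_P_above)
  ultimately show ?thesis
    by (simp add: pderiv_mult L_add coeff_pderiv coeff_P_top mult.commute)
qed

end

locale ops_functional = ops +
  fixes F :: "real poly \<Rightarrow> real" and a k :: real
  assumes F_add: "F (p + q) = F p + F q"
    and F_smult: "F (smult c p) = c * F p"
    and F_shift: "F ([:-a, 1:] * q) = k * L q"
begin

definition diag :: "nat \<Rightarrow> real" where
  "diag n = F (P n * P n) / h n"

definition off :: "nat \<Rightarrow> real" where
  "off n = (if n = 0 then 0 else F (P n * P (n - 1)) / h (n - 1))"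

lemma F_diff: "F (p - q) = F p - F q"
  using F_add[of "p - q" q] by simp

text \<open>Writing \<open>r = (x - a) Q + r(a)\<close> splits \<open>F(p r)\<close> into a moment and a multiple of \<open>F p\<close>.\<close>
lemma F_mult_split: "F (p * r) = k * L (p * synthetic_div r a) + poly r a * F p"
proof -
  have "p * r = p * ([:-a, 1:] * synthetic_div r a + [:poly r a:])"
    by (simp only: synthetic_div_correct')
  also have "\<dots> = [:-a, 1:] * (p * synthetic_div r a) + smult (poly r a) p"
    by (simp add: algebra_simps)
  finally have "p * r = [:-a, 1:] * (p * synthetic_div r a) + smult (poly r a) p" .
  then show ?thesis by (simp only: F_add F_smult F_shift)
qed

text \<open>Orthogonality kills the moment term for \<open>F(P\<^sub>iP\<^sub>j)\<close>, \<open>j \<le> i\<close>, but not for \<open>F(P\<^sub>mP\<^sub>m\<^sub>+\<^sub>1)\<close>.\<close>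
lemma F_product_lower:
  assumes "j \<le> i"
  shows "F (P i * P j) = poly (P j) a * F (P i)"
proof -
  have "L (P i * synthetic_div (P j) a) = 0"
    using assms by (intro orthogonal_lower coeff_synthetic_div_above) (simp add: degree_P)
  then show ?thesis by (simp add: F_mult_split)
qed

lemma F_product_upper: "F (P m * P (Suc m)) = k * h m + poly (P (Suc m)) a * F (P m)"
proof -
  have "L (P m * synthetic_div (P (Suc m)) a) = coeff (synthetic_div (P (Suc m)) a) m * h m"
    by (intro orthogonal_top coeff_synthetic_div_above) (simp add: degree_P)
  also have "\<dots> = h m"
    by (simp add: coeff_synthetic_div_top degree_P coeff_P_top)
  finally show ?thesis by (simp add: F_mult_split)
qed

lemma off_sum: "off (Suc n) + off n = (a - alpha n) * diag n + k"
proof -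
  have P_Suc: "P (Suc n) = [:-a, 1:] * P n + smult (a - alpha n) (P n) - smult (beta n) (P (n - 1))"
  proof (rule poly_eq_poly_eq_iff[THEN iffD1, OF ext])
    fix x
    show "poly (P (Suc n)) x
        = poly ([:-a, 1:] * P n + smult (a - alpha n) (P n) - smult (beta n) (P (n - 1))) x"
      using arg_cong[OF recurrence[of n], of "\<lambda>p. poly p x"] by (simp add: algebra_simps)
  qed
  have "P (Suc n) * P n = [:-a, 1:] * (P n * P n) + smult (a - alpha n) (P n * P n)
      - smult (beta n) (P n * P (n - 1))"
    by (subst P_Suc) (simp add: algebra_simps)
  then have "F (P (Suc n) * P n)
      = k * h n + (a - alpha n) * F (P n * P n) - beta n * F (P n * P (n - 1))"
    by (simp only: F_add F_diff F_smult F_shift)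
  moreover have "beta n * F (P n * P (n - 1)) / h n = off n"
    using norm_pos[of n] norm_pos[of "n - 1"] by (simp add: beta_eq off_def)
  ultimately show ?thesis
    using norm_pos[of n] by (simp add: off_def diag_def diff_divide_distrib add_divide_distrib)
qed

lemma diag_product: "beta (Suc m) * diag (Suc m) * diag m = (off (Suc m))\<^sup>2 - k * off (Suc m)"
proof -
  define Z where "Z = F (P (Suc m) * P m)"
  have Z_lower: "Z = poly (P m) a * F (P (Suc m))"
    unfolding Z_def by (rule F_product_lower) simp
  have Z_upper: "Z - k * h m = poly (P (Suc m)) a * F (P m)"
    unfolding Z_def using F_product_upper[of m] by (simp add: mult.commute[of "P (Suc m)"])
  have "F (P (Suc m) * P (Suc m)) * F (P m * P m)
      = (poly (P (Suc m)) a * F (P (Suc m))) * (poly (P m) a * F (P m))"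
    by (simp only: F_product_lower[OF order_refl])
  also have "\<dots> = Z * (Z - k * h m)"
    unfolding Z_upper by (simp add: Z_lower mult_ac)
  finally have "F (P (Suc m) * P (Suc m)) * F (P m * P m) = Z * (Z - k * h m)" .
  then show ?thesis
    using norm_pos[of m] norm_pos[of "Suc m"]
    by (simp add: beta_eq diag_def off_def Z_def field_simps power2_eq_square)
qed

end

subsection \<open>Specialisation to the Jacobi weight with a jump\<close>

text \<open>The hypotheses of the theorem; \<open>A \<ge> 0\<close>, \<open>A + B \<ge> 0\<close> only serve to guarantee the
  positivity of \<open>h\<^sub>n\<close>, which is assumed directly.\<close>
locale weighted_ops =
  fixes al be A B t :: real and P :: "nat \<Rightarrow> real poly" and alpha :: "nat \<Rightarrow> real"
  assumes al_pos: "al > 0" and be_pos: "be > 0"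
    and t_pos: "0 < t" and t_less_1: "t < 1"
    and monic_deg: "\<forall>n. degree (P n) = n \<and> lead_coeff (P n) = 1"
    and orth: "\<forall>i j. i \<noteq> j \<longrightarrow> ip al be A B t (P i) (P j) = 0"
    and h_pos: "\<forall>n. hn al be A B t P n > 0"
    and three_term: "\<forall>n. [:0, 1:] * P n = P (Suc n) + smult (alpha n) (P n)
                    + smult (betaN al be A B t P n) (P (n - 1))"
begin

lemma hn_eq: "hn al be A B t P n = moment al be A B t (P n * P n)"
  by (simp add: hn_def ip_eq_moment)

sublocale ops "moment al be A B t" P alpha "betaN al be A B t P"
proof unfold_locales
  show "moment al be A B t (p + q) = moment al be A B t p + moment al be A B t q" for p q
    using al_pos be_pos by (intro moment_add) auto
  show "lead_coeff (P n) = 1" for n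
    using monic_deg by blast
qed (use monic_deg orth h_pos three_term in
      \<open>auto simp: moment_smult ip_eq_moment hn_eq betaN_def\<close>)

sublocale jump: ops_functional "moment al be A B t" P alpha "betaN al be A B t P"
    "jump_term al be B t" t 0
  by unfold_locales (simp_all add: jump_term_def algebra_simps)

sublocale pole: ops_functional "moment al be A B t" P alpha "betaN al be A B t P"
    "pole_moment al be A B t" 1 "- be"
proof unfold_locales
  fix p q :: "real poly" and c :: real
  show "pole_moment al be A B t (p + q) = pole_moment al be A B t p + pole_moment al be A B t q"
    using al_pos be_pos by (intro pole_moment_add) auto
  show "pole_moment al be A B t (smult c p) = c * pole_moment al be A B t p"
    by (rule pole_moment_smult)
  show "pole_moment al be A B t ([:- 1, 1:] * q) = - be * moment al be A B t q"
    using al_pos be_pos by (intro pole_moment_root_one) auto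
qed

sublocale defect: ops_functional "moment al be A B t" P alpha "betaN al be A B t P"
    "ibp_defect al be A B t" 0 al
proof unfold_locales
  fix p q :: "real poly" and c :: real
  show "ibp_defect al be A B t (p + q) = ibp_defect al be A B t p + ibp_defect al be A B t q"
    using al_pos be_pos
    by (simp add: ibp_defect_def pole_moment_add L_add pderiv_add jump_term_def algebra_simps)
  show "ibp_defect al be A B t (smult c p) = c * ibp_defect al be A B t p"
    by (simp add: ibp_defect_def pole_moment_smult L_smult pderiv_smult jump_term_def algebra_simps)
  show "ibp_defect al be A B t ([:- 0, 1:] * q) = al * moment al be A B t q"
    using integration_by_parts[OF al_pos be_pos t_pos t_less_1, of A B q]
    by (simp add: ibp_defect_def L_add L_smult)
qed

lemma Rn_eq: "Rn al be A B t P n = jump.diag n"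
  by (simp add: Rn_def jump.diag_def jump_term_def hn_eq power2_eq_square)

lemma rn_eq: "rn al be A B t P n = jump.off n"
  by (simp add: rn_def jump.off_def jump_term_def hn_eq)

lemma xn_eq: "xn al be A B t P n = pole.diag n"
  by (simp add: xn_def pole.diag_def pole_moment_def hn_eq power2_eq_square)

lemma yn_eq: "yn al be A B t P n = pole.off n"
  by (simp add: yn_def pole.off_def pole_moment_def hn_eq)

lemma xn_minus_Rn: "xn al be A B t P n - Rn al be A B t P n = defect.diag n"
  by (simp add: xn_eq Rn_eq pole.diag_def jump.diag_def defect.diag_def ibp_defect_def
      L_pderiv_square diff_divide_distrib)

lemma yn_minus_rn: "yn al be A B t P n - rn al be A B t P n - real n = defect.off n"
proof (cases n)
  case (Suc m)
  then show ?thesis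
    using norm_pos[of m]
    by (simp add: yn_eq rn_eq pole.off_def jump.off_def defect.off_def ibp_defect_def
        L_pderiv_consecutive diff_divide_distrib)
qed (simp add: yn_def rn_def defect.off_def)

lemma recurrence_R_r:
  "rn al be A B t P (n + 1) + rn al be A B t P n = (t - alpha n) * Rn al be A B t P n"
  using jump.off_sum[of n] by (simp add: Rn_eq rn_eq)

lemma recurrence_x_y:
  "- (yn al be A B t P (n + 1) + yn al be A B t P n) = (alpha n - 1) * xn al be A B t P n + be"
  using pole.off_sum[of n] by (simp add: xn_eq yn_eq algebra_simps)

lemma recurrence_mixed:
  "yn al be A B t P (n + 1) + yn al be A B t P n - rn al be A B t P (n + 1) - rn al be A B t P n
     = 2 * real n + 1 + al - alpha n * (xn al be A B t P n - Rn al be A B t P n)"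
  using defect.off_sum[of n] yn_minus_rn[of n] yn_minus_rn[of "n + 1"] xn_minus_Rn[of n]
  by (simp add: algebra_simps)

lemma product_R:
  assumes "1 \<le> n"
  shows "betaN al be A B t P n * Rn al be A B t P n * Rn al be A B t P (n - 1)
     = (rn al be A B t P n)\<^sup>2"
proof -
  obtain m where n: "n = Suc m" using assms by (cases n) auto
  show ?thesis using jump.diag_product[of m] by (simp add: n Rn_eq rn_eq)
qed

lemma product_x:
  assumes "1 \<le> n"
  shows "betaN al be A B t P n * xn al be A B t P n * xn al be A B t P (n - 1)
     = (yn al be A B t P n)\<^sup>2 + be * yn al be A B t P n"
proof -
  obtain m where n: "n = Suc m" using assms by (cases n) auto
  show ?thesis using pole.diag_product[of m] by (simp add: n xn_eq yn_eq)
qed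

lemma product_defect:
  assumes "1 \<le> n"
  shows "betaN al be A B t P n * (xn al be A B t P n - Rn al be A B t P n)
       * (xn al be A B t P (n - 1) - Rn al be A B t P (n - 1))
     = (yn al be A B t P n - rn al be A B t P n - real n)\<^sup>2
       - al * (yn al be A B t P n - rn al be A B t P n - real n)"
proof -
  obtain m where n: "n = Suc m" using assms by (cases n) auto
  show ?thesis
    unfolding n xn_minus_Rn yn_minus_rn diff_Suc_1 by (rule defect.diag_product)
qed

text \<open>The mixed identity is the difference of the other three:
  \<open>x\<^sub>nR\<^sub>n\<^sub>-\<^sub>1 + x\<^sub>n\<^sub>-\<^sub>1R\<^sub>n = x\<^sub>nx\<^sub>n\<^sub>-\<^sub>1 + R\<^sub>nR\<^sub>n\<^sub>-\<^sub>1 - (x\<^sub>n - R\<^sub>n)(x\<^sub>n\<^sub>-\<^sub>1 - R\<^sub>n\<^sub>-\<^sub>1)\<close>.\<close>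
lemma product_mixed:
  assumes "1 \<le> n"
  shows "betaN al be A B t P n * (xn al be A B t P n * Rn al be A B t P (n - 1)
         + xn al be A B t P (n - 1) * Rn al be A B t P n)
     = (2 * real n + al + be) * yn al be A B t P n - (2 * real n + al) * rn al be A B t P n
       + 2 * yn al be A B t P n * rn al be A B t P n - real n * (real n + al)"
  using product_R[OF assms] product_x[OF assms] product_defect[OF assms]
  by (simp add: algebra_simps power2_eq_square)

end

theorem mainTheorem4:
  fixes al be A B t :: real
    and P :: "nat \<Rightarrow> real poly"
    and alpha :: "nat \<Rightarrow> real"
  assumes hal: "al > 0" and hbe: "be > 0"
    and hA: "A \<ge> 0" and hAB: "A + B \<ge> 0" and hnz: "A \<noteq> 0 \<or> B \<noteq> 0"
    and ht: "0 < t" "t < 1"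
    and hdeg: "\<forall>n. degree (P n) = n \<and> lead_coeff (P n) = 1"
    and horth: "\<forall>i j. i \<noteq> j \<longrightarrow> ip al be A B t (P i) (P j) = 0"
    and hpos: "\<forall>n. hn al be A B t P n > 0"
    and hrec: "\<forall>n. [:0, 1:] * P n = P (Suc n) + smult (alpha n) (P n)
                    + smult (betaN al be A B t P n) (P (n - 1))"
  shows
    "(\<forall>n. rn al be A B t P (n + 1) + rn al be A B t P n = (t - alpha n) * Rn al be A B t P n)
   \<and> (\<forall>n. - (yn al be A B t P (n + 1) + yn al be A B t P n)
          = (alpha n - 1) * xn al be A B t P n + be)
   \<and> (\<forall>n. yn al be A B t P (n + 1) + yn al be A B t P n - rn al be A B t P (n + 1) - rn al be A B t P n
          = 2 * real n + 1 + al - alpha n * (xn al be A B t P n - Rn al be A B t P n))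
   \<and> (\<forall>n\<ge>1. betaN al be A B t P n * Rn al be A B t P n * Rn al be A B t P (n - 1)
          = (rn al be A B t P n)^2)
   \<and> (\<forall>n\<ge>1. betaN al be A B t P n * xn al be A B t P n * xn al be A B t P (n - 1)
          = (yn al be A B t P n)^2 + be * yn al be A B t P n)
   \<and> (\<forall>n\<ge>1. betaN al be A B t P n * (xn al be A B t P n - Rn al be A B t P n)
              * (xn al be A B t P (n - 1) - Rn al be A B t P (n - 1))
          = (yn al be A B t P n - rn al be A B t P n - real n)^2
            - al * (yn al be A B t P n - rn al be A B t P n - real n))
   \<and> (\<forall>n\<ge>1. betaN al be A B t P n * (xn al be A B t P n * Rn al be A B t P (n - 1)
              + xn al be A B t P (n - 1) * Rn al be A B t P n)
          = (2 * real n + al + be) * yn al be A B t P n - (2 * real n + al) * rn al be A B t P n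
            + 2 * yn al be A B t P n * rn al be A B t P n - real n * (real n + al))"
proof -
  interpret weighted_ops al be A B t P alpha
    using hal hbe ht hdeg horth hpos hrec by unfold_locales
  show ?thesis
    using recurrence_R_r recurrence_x_y recurrence_mixed
      product_R product_x product_defect product_mixed
    by blast
qed

end
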